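(* Let $\alpha:[-1,1]\times[0,T)\to\mathbb{R}^2$ be a smooth solution of the curve diffusion flow $\partial_t\alpha=k_{ss}\nu$ with generalised Neumann boundary conditions in the cone. Then for every $\ell\in\mathbb{N}$ and every $t\in[0,T)$, $k_{s^{2\ell-1}}(\pm1,t)=0$ (one-sided arclength derivatives).
   Context: Fix angles $0\le\theta_2<\theta_1<\pi$ and the rays $\bar\gamma_i=\{\rho(\cos\theta_i,\sin\theta_i):\rho>0\}$, $i=1,2$, forming a cone with tip at the origin. For a family of curves $\alpha(\cdot,t)$, $s$ is arclength, $\nu$ the outer unit normal, $k=-\langle\alpha_{ss},\nu\rangle$ the scalar curvature and $k_{s^m}$ its $m$-th arclength derivative. Generalised Neumann boundary conditions mean: for all $t$, $\alpha(-1,t)\in\bar\gamma_1$, $\alpha(1,t)\in\bar\gamma_2$, the curve meets these rays perpendicularly (the normal $\nu$ is tangent to the ray at each endpoint), and $k_s(\pm1,t)=0$. *)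

theory Defs
  imports "HOL-Analysis.Analysis"
begin

text \<open>Curves in the plane are maps from the parameter strip [-1,1] x [0,T) to
  R^2 = real x real; a point of the strip is a pair (u,t).\<close>

definition strip :: "real \<Rightarrow> (real \<times> real) set" where
  "strip T = {-1..1} \<times> {0..<T}"

definition dU :: "(real \<times> real \<Rightarrow> 'a::real_normed_vector) \<Rightarrow> real \<times> real \<Rightarrow> 'a" where
  "dU f p = vector_derivative (\<lambda>v. f (v, snd p)) (at (fst p) within {-1..1})"

definition dT :: "real \<Rightarrow> (real \<times> real \<Rightarrow> 'a::real_normed_vector) \<Rightarrow> real \<times> real \<Rightarrow> 'a" where
  "dT T f p = vector_derivative (\<lambda>s. f (fst p, s)) (at (snd p) within {0..<T})"

fun pd :: "real \<Rightarrow> bool list \<Rightarrow> (real \<times> real \<Rightarrow> 'a::real_normed_vector) \<Rightarrow> real \<times> real \<Rightarrow> 'a" where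
  "pd T [] f = f"
| "pd T (b # bs) f = (if b then dU (pd T bs f) else dT T (pd T bs f))"

definition smooth_on_strip :: "real \<Rightarrow> (real \<times> real \<Rightarrow> 'a::real_normed_vector) \<Rightarrow> bool" where
  "smooth_on_strip T f \<longleftrightarrow>
     (\<forall>bs. continuous_on (strip T) (pd T bs f) \<and>
        (\<forall>p\<in>strip T.
           ((\<lambda>v. pd T bs f (v, snd p)) has_vector_derivative dU (pd T bs f) p) (at (fst p) within {-1..1}) \<and>
           ((\<lambda>s. pd T bs f (fst p, s)) has_vector_derivative dT T (pd T bs f) p) (at (snd p) within {0..<T})))"

definition dS :: "(real \<times> real \<Rightarrow> real \<times> real) \<Rightarrow> (real \<times> real \<Rightarrow> 'a::real_normed_vector) \<Rightarrow> real \<times> real \<Rightarrow> 'a" where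
  "dS \<alpha> f p = inverse (norm (dU \<alpha> p)) *\<^sub>R dU f p"

definition rotJ :: "real \<times> real \<Rightarrow> real \<times> real" where
  "rotJ v = (- snd v, fst v)"

text \<open>The curve runs from the ray at angle theta1
  (u = -1) to the ray at angle theta2 < theta1 (u = 1), i.e. clockwise about the
  tip of the cone, so the outer normal is the counterclockwise rotation of the tangent.\<close>
definition tangent :: "(real \<times> real \<Rightarrow> real \<times> real) \<Rightarrow> real \<times> real \<Rightarrow> real \<times> real" where
  "tangent \<alpha> p = dS \<alpha> \<alpha> p"

definition normal :: "(real \<times> real \<Rightarrow> real \<times> real) \<Rightarrow> real \<times> real \<Rightarrow> real \<times> real" where
  "normal \<alpha> p = rotJ (tangent \<alpha> p)"

definition curv :: "(real \<times> real \<Rightarrow> real \<times> real) \<Rightarrow> real \<times> real \<Rightarrow> real" where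
  "curv \<alpha> p = - inner (dS \<alpha> (dS \<alpha> \<alpha>) p) (normal \<alpha> p)"

definition curv_s :: "(real \<times> real \<Rightarrow> real \<times> real) \<Rightarrow> nat \<Rightarrow> real \<times> real \<Rightarrow> real" where
  "curv_s \<alpha> m = (dS \<alpha> ^^ m) (curv \<alpha>)"

definition ray :: "real \<Rightarrow> (real \<times> real) set" where
  "ray \<theta> = {(\<rho> * cos \<theta>, \<rho> * sin \<theta>) | \<rho>. \<rho> > 0}"

definition CDF_GNBC :: "real \<Rightarrow> real \<Rightarrow> real \<Rightarrow> (real \<times> real \<Rightarrow> real \<times> real) \<Rightarrow> bool" where
  "CDF_GNBC \<theta>1 \<theta>2 T \<alpha> \<longleftrightarrow>
     smooth_on_strip T \<alpha> \<and>
     (\<forall>p\<in>strip T. dU \<alpha> p \<noteq> 0) \<and>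
     (\<forall>p\<in>strip T. dT T \<alpha> p = curv_s \<alpha> 2 p *\<^sub>R normal \<alpha> p) \<and>
     (\<forall>t\<in>{0..<T}.
        \<alpha> (-1, t) \<in> ray \<theta>1 \<and> \<alpha> (1, t) \<in> ray \<theta>2 \<and>
        (\<exists>c. normal \<alpha> (-1, t) = c *\<^sub>R (cos \<theta>1, sin \<theta>1)) \<and>
        (\<exists>c. normal \<alpha> (1, t) = c *\<^sub>R (cos \<theta>2, sin \<theta>2)) \<and>
        curv_s \<alpha> 1 (-1, t) = 0 \<and> curv_s \<alpha> 1 (1, t) = 0)"

end

theory Submission
  imports Defs
begin

text \<open>Write \<open>\<kappa>\<^sub>m\<close> for the \<open>m\<close>-th arclength derivative of the curvature. Along the flow the unit
  tangent turns at rate \<open>\<kappa>\<^sub>3\<close> and \<open>\<partial>\<^sub>t \<partial>\<^sub>s = \<partial>\<^sub>s \<partial>\<^sub>t - \<kappa>\<^sub>0 \<kappa>\<^sub>2 \<partial>\<^sub>s\<close>, so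
  \<open>\<partial>\<^sub>t \<kappa>\<^sub>m = Q\<^sub>m - \<kappa>\<^sub>m\<^sub>+\<^sub>4\<close> with \<open>Q\<^sub>m\<close> a polynomial in \<open>\<kappa>\<^sub>0, \<dots>, \<kappa>\<^sub>m\<^sub>+\<^sub>2\<close> all of whose
  monomials carry a total number of derivatives of the parity of \<open>m\<close>.
  At an endpoint the normal stays parallel to a fixed ray, and differentiating the resulting
  relation \<open>\<langle>\<tau>, e\<rangle> = 0\<close> in time gives \<open>\<kappa>\<^sub>3 = 0\<close> there; together with \<open>\<kappa>\<^sub>1 = 0\<close> an induction
  over odd \<open>m\<close> kills \<open>\<kappa>\<^sub>m\<^sub>+\<^sub>4 = Q\<^sub>m - \<partial>\<^sub>t \<kappa>\<^sub>m\<close>: \<open>\<kappa>\<^sub>m\<close> vanishes at the endpoint for all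
  times, and every monomial of the odd polynomial \<open>Q\<^sub>m\<close> contains some odd \<open>\<kappa>\<^sub>j\<close>, \<open>j \<le> m + 2\<close>.\<close>

section \<open>Partial derivatives and smoothness on the strip\<close>

definition eq_on_strip :: "real \<Rightarrow> (real \<times> real \<Rightarrow> 'a) \<Rightarrow> (real \<times> real \<Rightarrow> 'a) \<Rightarrow> bool" where
  "eq_on_strip T f g \<longleftrightarrow> (\<forall>p\<in>strip T. f p = g p)"

lemma mem_strip_iff: "p \<in> strip T \<longleftrightarrow> fst p \<in> {-1..1} \<and> snd p \<in> {0..<T}"
  by (cases p) (auto simp: strip_def)

lemma eq_on_strip_sym: "eq_on_strip T f g \<Longrightarrow> eq_on_strip T g f"
  by (simp add: eq_on_strip_def)

lemma dU_cong:
  assumes "eq_on_strip T f g" and p: "p \<in> strip T"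
  shows "dU f p = dU g p"
proof -
  have "f (v, snd p) = g (v, snd p)" if "v \<in> {-1..1}" for v
    using assms that by (auto simp: eq_on_strip_def mem_strip_iff)
  then have "((\<lambda>v. f (v, snd p)) has_vector_derivative D) (at (fst p) within {-1..1}) \<longleftrightarrow>
             ((\<lambda>v. g (v, snd p)) has_vector_derivative D) (at (fst p) within {-1..1})" for D
    using p has_vector_derivative_transform[of "fst p" "{-1..1}"]
    by (metis (no_types, lifting) mem_strip_iff)
  then show ?thesis
    by (simp add: dU_def vector_derivative_def)
qed

lemma dT_cong:
  assumes "eq_on_strip T f g" and p: "p \<in> strip T"
  shows "dT T f p = dT T g p"
proof -
  have "f (fst p, s) = g (fst p, s)" if "s \<in> {0..<T}" for s
    using assms that by (auto simp: eq_on_strip_def mem_strip_iff)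
  then have "((\<lambda>s. f (fst p, s)) has_vector_derivative D) (at (snd p) within {0..<T}) \<longleftrightarrow>
             ((\<lambda>s. g (fst p, s)) has_vector_derivative D) (at (snd p) within {0..<T})" for D
    using p has_vector_derivative_transform[of "snd p" "{0..<T}"]
    by (metis (no_types, lifting) mem_strip_iff)
  then show ?thesis
    by (simp add: dT_def vector_derivative_def)
qed

lemma eq_on_strip_pd: "eq_on_strip T f g \<Longrightarrow> eq_on_strip T (pd T bs f) (pd T bs g)"
proof (induction bs)
  case (Cons b bs)
  then show ?case
    using dU_cong[OF Cons.IH] dT_cong[OF Cons.IH] by (simp add: eq_on_strip_def)
qed simp

lemma pd_append_singleton: "pd T (bs @ [b]) f = pd T bs (if b then dU f else dT T f)"
  by (induction bs) auto

lemma dU_eqI: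
  "p \<in> strip T \<Longrightarrow> ((\<lambda>v. f (v, snd p)) has_vector_derivative D) (at (fst p) within {-1..1}) \<Longrightarrow>
   dU f p = D"
  unfolding dU_def by (rule vector_derivative_within) (auto simp: mem_strip_iff trivial_limit_within)

lemma dT_eqI:
  assumes p: "p \<in> strip T"
    and D: "((\<lambda>s. f (fst p, s)) has_vector_derivative D) (at (snd p) within {0..<T})"
  shows "dT T f p = D"
proof -
  have "snd p islimpt {0..<T}"
    using p islimpt_Ico[of 0 T "snd p"] by (auto simp: mem_strip_iff)
  then show ?thesis
    unfolding dT_def by (intro vector_derivative_within D) (simp add: trivial_limit_within)
qed

lemma dT_eq_0_if_vanishes_on_line:
  assumes u: "u \<in> {-1..1}" and t: "t \<in> {0..<T}" and zero: "\<And>s. s \<in> {0..<T} \<Longrightarrow> f (u, s) = 0"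
  shows "dT T f (u, t) = 0"
proof (rule dT_eqI)
  show "(u, t) \<in> strip T"
    using u t by (simp add: mem_strip_iff)
  show "((\<lambda>s. f (fst (u, t), s)) has_vector_derivative 0) (at (snd (u, t)) within {0..<T})"
    using has_vector_derivative_transform[OF t zero has_vector_derivative_const] by simp
qed

definition C1_on_strip :: "real \<Rightarrow> (real \<times> real \<Rightarrow> 'a::real_normed_vector) \<Rightarrow> bool" where
  "C1_on_strip T f \<longleftrightarrow> continuous_on (strip T) f \<and> (\<forall>p\<in>strip T.
     ((\<lambda>v. f (v, snd p)) has_vector_derivative dU f p) (at (fst p) within {-1..1}) \<and>
     ((\<lambda>s. f (fst p, s)) has_vector_derivative dT T f p) (at (snd p) within {0..<T}))"

definition C1_on_strip_with ::
    "real \<Rightarrow> (real \<times> real \<Rightarrow> 'a::real_normed_vector) \<Rightarrow> (real \<times> real \<Rightarrow> 'a) \<Rightarrow> (real \<times> real \<Rightarrow> 'a) \<Rightarrow> bool" where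
  "C1_on_strip_with T f fu ft \<longleftrightarrow> C1_on_strip T f \<and> eq_on_strip T (dU f) fu \<and> eq_on_strip T (dT T f) ft"

text \<open>All partial derivatives of order at most \<open>k\<close> are \<open>C\<^sup>1\<close>, i.e.\ \<open>Ck_on_strip T k\<close> is \<open>C\<^sup>k\<^sup>+\<^sup>1\<close>.\<close>
definition Ck_on_strip :: "real \<Rightarrow> nat \<Rightarrow> (real \<times> real \<Rightarrow> 'a::real_normed_vector) \<Rightarrow> bool" where
  "Ck_on_strip T k f \<longleftrightarrow> (\<forall>bs. length bs \<le> k \<longrightarrow> C1_on_strip T (pd T bs f))"

lemma C1_on_strip_imp_continuous_on: "C1_on_strip T f \<Longrightarrow> continuous_on (strip T) f"
  by (simp add: C1_on_strip_def)

lemma C1_on_stripD: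
  assumes "C1_on_strip T f" and "p \<in> strip T"
  shows "((\<lambda>v. f (v, snd p)) has_vector_derivative dU f p) (at (fst p) within {-1..1})"
    and "((\<lambda>s. f (fst p, s)) has_vector_derivative dT T f p) (at (snd p) within {0..<T})"
  using assms by (auto simp: C1_on_strip_def)

lemma C1_on_strip_cong:
  assumes eq: "eq_on_strip T f g" and f: "C1_on_strip T f"
  shows "C1_on_strip T g"
  unfolding C1_on_strip_def
proof (intro conjI ballI)
  show "continuous_on (strip T) g"
    using eq f continuous_on_cong unfolding C1_on_strip_def eq_on_strip_def by blast
  fix p assume p: "p \<in> strip T"
  then have u: "fst p \<in> {-1..1}" and t: "snd p \<in> {0..<T}"
    by (simp_all add: mem_strip_iff)
  have "g (v, snd p) = f (v, snd p)" if "v \<in> {-1..1}" for v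
    using eq t that by (auto simp: eq_on_strip_def mem_strip_iff)
  from has_vector_derivative_transform[OF u this C1_on_stripD(1)[OF f p]]
  show "((\<lambda>v. g (v, snd p)) has_vector_derivative dU g p) (at (fst p) within {-1..1})"
    by (simp add: dU_cong[OF eq p])
  have "g (fst p, s) = f (fst p, s)" if "s \<in> {0..<T}" for s
    using eq u that by (auto simp: eq_on_strip_def mem_strip_iff)
  from has_vector_derivative_transform[OF t this C1_on_stripD(2)[OF f p]]
  show "((\<lambda>s. g (fst p, s)) has_vector_derivative dT T g p) (at (snd p) within {0..<T})"
    by (simp add: dT_cong[OF eq p])
qed

lemma C1_on_strip_withI:
  assumes "continuous_on (strip T) f"
    and "\<And>p. p \<in> strip T \<Longrightarrow> ((\<lambda>v. f (v, snd p)) has_vector_derivative fu p) (at (fst p) within {-1..1})"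
    and "\<And>p. p \<in> strip T \<Longrightarrow> ((\<lambda>s. f (fst p, s)) has_vector_derivative ft p) (at (snd p) within {0..<T})"
  shows "C1_on_strip_with T f fu ft"
proof -
  have "eq_on_strip T (dU f) fu" "eq_on_strip T (dT T f) ft"
    using assms(2,3) dU_eqI dT_eqI unfolding eq_on_strip_def by blast+
  with assms show ?thesis
    by (simp add: C1_on_strip_with_def C1_on_strip_def eq_on_strip_def)
qed

lemma smooth_on_strip_iff_Ck: "smooth_on_strip T f \<longleftrightarrow> (\<forall>k. Ck_on_strip T k f)"
  unfolding smooth_on_strip_def Ck_on_strip_def C1_on_strip_def by blast

lemma Ck_on_strip_cong: "eq_on_strip T f g \<Longrightarrow> Ck_on_strip T k f \<Longrightarrow> Ck_on_strip T k g"
  unfolding Ck_on_strip_def by (meson eq_on_strip_pd C1_on_strip_cong)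

lemma Ck_on_strip_0: "Ck_on_strip T 0 f \<longleftrightarrow> C1_on_strip T f"
  by (simp add: Ck_on_strip_def)

lemma Ck_on_strip_mono: "Ck_on_strip T k f \<Longrightarrow> j \<le> k \<Longrightarrow> Ck_on_strip T j f"
  by (auto simp: Ck_on_strip_def)

lemma Ck_on_strip_Suc:
  "Ck_on_strip T (Suc k) f \<longleftrightarrow> C1_on_strip T f \<and> Ck_on_strip T k (dU f) \<and> Ck_on_strip T k (dT T f)"
proof
  assume f: "Ck_on_strip T (Suc k) f"
  show "C1_on_strip T f \<and> Ck_on_strip T k (dU f) \<and> Ck_on_strip T k (dT T f)"
    using f[unfolded Ck_on_strip_def, rule_format, of "[]"]
      f[unfolded Ck_on_strip_def, rule_format, of "_ @ [True]"]
      f[unfolded Ck_on_strip_def, rule_format, of "_ @ [False]"]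
    by (auto simp: Ck_on_strip_def pd_append_singleton)
next
  assume f: "C1_on_strip T f \<and> Ck_on_strip T k (dU f) \<and> Ck_on_strip T k (dT T f)"
  show "Ck_on_strip T (Suc k) f"
    unfolding Ck_on_strip_def
  proof (intro allI impI)
    fix bs :: "bool list" assume l: "length bs \<le> Suc k"
    show "C1_on_strip T (pd T bs f)"
    proof (cases bs rule: rev_cases)
      case (snoc bs' b)
      then show ?thesis
        using f l by (cases b) (auto simp: Ck_on_strip_def pd_append_singleton)
    qed (use f in simp)
  qed
qed

lemma Ck_on_strip_SucI:
  "C1_on_strip_with T f fu ft \<Longrightarrow> Ck_on_strip T k fu \<Longrightarrow> Ck_on_strip T k ft \<Longrightarrow> Ck_on_strip T (Suc k) f"
  unfolding Ck_on_strip_Suc C1_on_strip_with_def using Ck_on_strip_cong eq_on_strip_sym by blast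

lemma C1_on_strip_with_const: "C1_on_strip_with T (\<lambda>p. c) (\<lambda>p. 0) (\<lambda>p. 0)"
  by (rule C1_on_strip_withI) auto

lemma C1_on_strip_with_add:
  assumes f: "C1_on_strip T f" and g: "C1_on_strip T g"
  shows "C1_on_strip_with T (\<lambda>p. f p + g p) (\<lambda>p. dU f p + dU g p) (\<lambda>p. dT T f p + dT T g p)"
  by (rule C1_on_strip_withI)
    (use C1_on_strip_imp_continuous_on[OF f] C1_on_strip_imp_continuous_on[OF g]
        C1_on_stripD[OF f] C1_on_stripD[OF g]
      in \<open>auto intro!: continuous_intros has_vector_derivative_add\<close>)

lemma C1_on_strip_with_linear:
  assumes L: "bounded_linear L" and f: "C1_on_strip T f"
  shows "C1_on_strip_with T (\<lambda>p. L (f p)) (\<lambda>p. L (dU f p)) (\<lambda>p. L (dT T f p))"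
proof (rule C1_on_strip_withI)
  show "continuous_on (strip T) (\<lambda>p. L (f p))"
    using C1_on_strip_imp_continuous_on[OF f]
    by (auto intro: continuous_on_compose2[OF linear_continuous_on[OF L]])
qed (use C1_on_stripD[OF f] in \<open>auto intro: bounded_linear.has_vector_derivative[OF L]\<close>)

lemma C1_on_strip_with_mult:
  fixes f g :: "real \<times> real \<Rightarrow> 'a::real_normed_algebra"
  assumes f: "C1_on_strip T f" and g: "C1_on_strip T g"
  shows "C1_on_strip_with T (\<lambda>p. f p * g p)
           (\<lambda>p. f p * dU g p + dU f p * g p) (\<lambda>p. f p * dT T g p + dT T f p * g p)"
  by (rule C1_on_strip_withI)
    (use C1_on_strip_imp_continuous_on[OF f] C1_on_strip_imp_continuous_on[OF g]
        C1_on_stripD[OF f] C1_on_stripD[OF g]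
      in \<open>auto intro!: continuous_intros has_vector_derivative_mult\<close>)

lemma C1_on_strip_with_powr:
  fixes f :: "real \<times> real \<Rightarrow> real"
  assumes f: "C1_on_strip T f" and pos: "\<And>p. p \<in> strip T \<Longrightarrow> f p > 0"
  shows "C1_on_strip_with T (\<lambda>p. f p powr r)
           (\<lambda>p. r * f p powr (r - 1) * dU f p) (\<lambda>p. r * f p powr (r - 1) * dT T f p)"
proof (rule C1_on_strip_withI)
  show "continuous_on (strip T) (\<lambda>p. f p powr r)"
    using C1_on_strip_imp_continuous_on[OF f] pos
    by (auto intro!: continuous_intros simp: less_imp_neq[symmetric])
  fix p assume p: "p \<in> strip T"
  have chain: "((\<lambda>x. g x powr r) has_vector_derivative r * f p powr (r - 1) * D) (at x within S)"
    if "(g has_vector_derivative D) (at x within S)" and "g x = f p" for g :: "real \<Rightarrow> real" and x D S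
  proof -
    have "((\<lambda>z. z powr r) has_real_derivative r * f p powr (r - 1)) (at (g x))"
      using has_real_derivative_powr[OF pos[OF p]] that(2) by simp
    from DERIV_chain2[where f = "\<lambda>z. z powr r" and g = g, OF this] that(1) show ?thesis
      by (simp add: has_real_derivative_iff_has_vector_derivative)
  qed
  show "((\<lambda>v. f (v, snd p) powr r) has_vector_derivative r * f p powr (r - 1) * dU f p)
          (at (fst p) within {-1..1})"
    by (rule chain[OF C1_on_stripD(1)[OF f p]]) simp
  show "((\<lambda>s. f (fst p, s) powr r) has_vector_derivative r * f p powr (r - 1) * dT T f p)
          (at (snd p) within {0..<T})"
    by (rule chain[OF C1_on_stripD(2)[OF f p]]) simp
qed

lemma C1_on_strip_with_imp_C1: "C1_on_strip_with T f fu ft \<Longrightarrow> C1_on_strip T f"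
  by (simp add: C1_on_strip_with_def)

lemma C1_on_strip_withD:
  assumes "C1_on_strip_with T f fu ft" and "p \<in> strip T"
  shows "dU f p = fu p" and "dT T f p = ft p"
  using assms by (auto simp: C1_on_strip_with_def eq_on_strip_def)

lemma Ck_on_strip_const: "Ck_on_strip T k (\<lambda>p. c)"
proof (induction k arbitrary: c)
  case (Suc k)
  show ?case
    by (rule Ck_on_strip_SucI[OF C1_on_strip_with_const Suc.IH Suc.IH])
qed (simp add: Ck_on_strip_0 C1_on_strip_with_imp_C1[OF C1_on_strip_with_const])

lemma Ck_on_strip_add:
  "Ck_on_strip T k f \<Longrightarrow> Ck_on_strip T k g \<Longrightarrow> Ck_on_strip T k (\<lambda>p. f p + g p)"
proof (induction k arbitrary: f g)
  case 0
  then show ?case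
    by (simp add: Ck_on_strip_0 C1_on_strip_with_imp_C1[OF C1_on_strip_with_add])
next
  case (Suc k)
  then have "C1_on_strip T f" "C1_on_strip T g"
    by (simp_all add: Ck_on_strip_Suc)
  with Suc show ?case
    by (intro Ck_on_strip_SucI[OF C1_on_strip_with_add] Suc.IH) (auto simp: Ck_on_strip_Suc)
qed

lemma Ck_on_strip_linear:
  "bounded_linear L \<Longrightarrow> Ck_on_strip T k f \<Longrightarrow> Ck_on_strip T k (\<lambda>p. L (f p))"
proof (induction k arbitrary: f)
  case 0
  then show ?case
    by (simp add: Ck_on_strip_0 C1_on_strip_with_imp_C1[OF C1_on_strip_with_linear])
next
  case (Suc k)
  then have "C1_on_strip T f"
    by (simp add: Ck_on_strip_Suc)
  with Suc show ?case
    by (intro Ck_on_strip_SucI[OF C1_on_strip_with_linear] Suc.IH) (auto simp: Ck_on_strip_Suc)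
qed

lemma Ck_on_strip_mult:
  fixes f g :: "real \<times> real \<Rightarrow> 'a::real_normed_algebra"
  shows "Ck_on_strip T k f \<Longrightarrow> Ck_on_strip T k g \<Longrightarrow> Ck_on_strip T k (\<lambda>p. f p * g p)"
proof (induction k arbitrary: f g)
  case 0
  then show ?case
    by (simp add: Ck_on_strip_0 C1_on_strip_with_imp_C1[OF C1_on_strip_with_mult])
next
  case (Suc k)
  have f: "C1_on_strip T f" "Ck_on_strip T k (dU f)" "Ck_on_strip T k (dT T f)" "Ck_on_strip T k f"
    using Suc.prems(1) Ck_on_strip_mono[OF Suc.prems(1), of k] by (auto simp: Ck_on_strip_Suc)
  have g: "C1_on_strip T g" "Ck_on_strip T k (dU g)" "Ck_on_strip T k (dT T g)" "Ck_on_strip T k g"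
    using Suc.prems(2) Ck_on_strip_mono[OF Suc.prems(2), of k] by (auto simp: Ck_on_strip_Suc)
  show ?case
    by (rule Ck_on_strip_SucI[OF C1_on_strip_with_mult[OF f(1) g(1)]];
        rule Ck_on_strip_add; rule Suc.IH) (use f g in auto)
qed

lemma Ck_on_strip_powr:
  fixes f :: "real \<times> real \<Rightarrow> real"
  assumes pos: "\<And>p. p \<in> strip T \<Longrightarrow> f p > 0"
  shows "Ck_on_strip T k f \<Longrightarrow> Ck_on_strip T k (\<lambda>p. f p powr r)"
proof (induction k arbitrary: r)
  case 0
  then show ?case
    by (simp add: Ck_on_strip_0 C1_on_strip_with_imp_C1[OF C1_on_strip_with_powr[OF _ pos]])
next
  case (Suc k)
  have f: "C1_on_strip T f" "Ck_on_strip T k (dU f)" "Ck_on_strip T k (dT T f)" "Ck_on_strip T k f"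
    using Suc.prems Ck_on_strip_mono[OF Suc.prems, of k] by (auto simp: Ck_on_strip_Suc)
  have "Ck_on_strip T k (\<lambda>p. r * f p powr (r - 1))"
    by (rule Ck_on_strip_mult[OF Ck_on_strip_const Suc.IH[OF f(4)]])
  from Ck_on_strip_SucI[OF C1_on_strip_with_powr[OF f(1) pos]
      Ck_on_strip_mult[OF this f(2)] Ck_on_strip_mult[OF this f(3)]]
  show ?case .
qed

lemma smooth_on_strip_imp_C1: "smooth_on_strip T f \<Longrightarrow> C1_on_strip T f"
  by (simp add: smooth_on_strip_iff_Ck flip: Ck_on_strip_0)

lemma smooth_on_strip_dU: "smooth_on_strip T f \<Longrightarrow> smooth_on_strip T (dU f)"
  by (meson smooth_on_strip_iff_Ck Ck_on_strip_Suc)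

lemma smooth_on_strip_dT: "smooth_on_strip T f \<Longrightarrow> smooth_on_strip T (dT T f)"
  by (meson smooth_on_strip_iff_Ck Ck_on_strip_Suc)

lemma smooth_on_strip_const: "smooth_on_strip T (\<lambda>p. c)"
  by (simp add: smooth_on_strip_iff_Ck Ck_on_strip_const)

lemma smooth_on_strip_add:
  "smooth_on_strip T f \<Longrightarrow> smooth_on_strip T g \<Longrightarrow> smooth_on_strip T (\<lambda>p. f p + g p)"
  by (simp add: smooth_on_strip_iff_Ck Ck_on_strip_add)

lemma smooth_on_strip_linear:
  "bounded_linear L \<Longrightarrow> smooth_on_strip T f \<Longrightarrow> smooth_on_strip T (\<lambda>p. L (f p))"
  by (simp add: smooth_on_strip_iff_Ck Ck_on_strip_linear)

lemma smooth_on_strip_mult: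
  fixes f g :: "real \<times> real \<Rightarrow> 'a::real_normed_algebra"
  shows "smooth_on_strip T f \<Longrightarrow> smooth_on_strip T g \<Longrightarrow> smooth_on_strip T (\<lambda>p. f p * g p)"
  by (simp add: smooth_on_strip_iff_Ck Ck_on_strip_mult)

lemma smooth_on_strip_powr:
  fixes f :: "real \<times> real \<Rightarrow> real"
  shows "(\<And>p. p \<in> strip T \<Longrightarrow> f p > 0) \<Longrightarrow> smooth_on_strip T f \<Longrightarrow> smooth_on_strip T (\<lambda>p. f p powr r)"
  by (simp add: smooth_on_strip_iff_Ck Ck_on_strip_powr)

lemma smooth_on_strip_minus: "smooth_on_strip T f \<Longrightarrow> smooth_on_strip T (\<lambda>p. - f p)"
  using smooth_on_strip_linear[OF bounded_linear_minus[OF bounded_linear_ident]] .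

lemma smooth_on_strip_diff:
  "smooth_on_strip T f \<Longrightarrow> smooth_on_strip T g \<Longrightarrow> smooth_on_strip T (\<lambda>p. f p - g p)"
  using smooth_on_strip_add[OF _ smooth_on_strip_minus, of T f g] by simp

lemma dU_const: "p \<in> strip T \<Longrightarrow> dU (\<lambda>p. c) p = 0"
  and dT_const: "p \<in> strip T \<Longrightarrow> dT T (\<lambda>p. c) p = 0"
  using C1_on_strip_withD[OF C1_on_strip_with_const] by blast+

lemma dU_add:
    "C1_on_strip T f \<Longrightarrow> C1_on_strip T g \<Longrightarrow> p \<in> strip T \<Longrightarrow>
     dU (\<lambda>p. f p + g p) p = dU f p + dU g p"
  and dT_add:
    "C1_on_strip T f \<Longrightarrow> C1_on_strip T g \<Longrightarrow> p \<in> strip T \<Longrightarrow>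
     dT T (\<lambda>p. f p + g p) p = dT T f p + dT T g p"
  using C1_on_strip_withD[OF C1_on_strip_with_add] by blast+

lemma dU_linear:
    "bounded_linear L \<Longrightarrow> C1_on_strip T f \<Longrightarrow> p \<in> strip T \<Longrightarrow> dU (\<lambda>p. L (f p)) p = L (dU f p)"
  and dT_linear:
    "bounded_linear L \<Longrightarrow> C1_on_strip T f \<Longrightarrow> p \<in> strip T \<Longrightarrow> dT T (\<lambda>p. L (f p)) p = L (dT T f p)"
  using C1_on_strip_withD[OF C1_on_strip_with_linear] by blast+

lemma dU_minus: "C1_on_strip T f \<Longrightarrow> p \<in> strip T \<Longrightarrow> dU (\<lambda>p. - f p) p = - dU f p"
  and dT_minus: "C1_on_strip T f \<Longrightarrow> p \<in> strip T \<Longrightarrow> dT T (\<lambda>p. - f p) p = - dT T f p"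
  using dU_linear dT_linear bounded_linear_minus[OF bounded_linear_ident] by blast+

lemma dU_diff:
  "C1_on_strip T f \<Longrightarrow> C1_on_strip T g \<Longrightarrow> p \<in> strip T \<Longrightarrow>
   dU (\<lambda>p. f p - g p) p = dU f p - dU g p"
  by (rule dU_eqI) (auto intro!: has_vector_derivative_diff C1_on_stripD)

lemma dT_diff:
  "C1_on_strip T f \<Longrightarrow> C1_on_strip T g \<Longrightarrow> p \<in> strip T \<Longrightarrow>
   dT T (\<lambda>p. f p - g p) p = dT T f p - dT T g p"
  by (rule dT_eqI) (auto intro!: has_vector_derivative_diff C1_on_stripD)

lemma dU_mult:
  fixes f g :: "real \<times> real \<Rightarrow> 'a::real_normed_algebra"
  shows "C1_on_strip T f \<Longrightarrow> C1_on_strip T g \<Longrightarrow> p \<in> strip T \<Longrightarrow>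
         dU (\<lambda>p. f p * g p) p = f p * dU g p + dU f p * g p"
  using C1_on_strip_withD[OF C1_on_strip_with_mult] by blast

lemma dT_mult:
  fixes f g :: "real \<times> real \<Rightarrow> 'a::real_normed_algebra"
  shows "C1_on_strip T f \<Longrightarrow> C1_on_strip T g \<Longrightarrow> p \<in> strip T \<Longrightarrow>
         dT T (\<lambda>p. f p * g p) p = f p * dT T g p + dT T f p * g p"
  using C1_on_strip_withD[OF C1_on_strip_with_mult] by blast

section \<open>Symmetry of mixed partial derivatives\<close>

lemma dT_eq_dT_left_plus_integral:
  fixes f :: "real \<times> real \<Rightarrow> 'a::banach"
  assumes f: "C1_on_strip T f" and fu: "C1_on_strip T (dU f)"
    and cont: "continuous_on (strip T) (dT T (dU f))"
    and u: "u \<in> {-1..1}" and t: "t \<in> {0..<T}"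
  shows "dT T f (u, t) = dT T f (-1, t) + integral {-1..u} (\<lambda>v. dT T (dU f) (v, t))"
proof (rule dT_eqI)
  show ut: "(u, t) \<in> strip T"
    using u t by (simp add: mem_strip_iff)
  have ftc: "f (u, s) = f (-1, s) + integral {-1..u} (\<lambda>v. dU f (v, s))" if s: "s \<in> {0..<T}" for s
  proof -
    have "((\<lambda>v. dU f (v, s)) has_integral f (u, s) - f (-1, s)) {-1..u}"
    proof (rule fundamental_theorem_of_calculus)
      fix v assume "v \<in> {-1..u}"
      with u s have "(v, s) \<in> strip T" and "{-1..u} \<subseteq> {-1..1}"
        by (auto simp: mem_strip_iff)
      from has_vector_derivative_within_subset[OF C1_on_stripD(1)[OF f this(1)] this(2)]
      show "((\<lambda>v. f (v, s)) has_vector_derivative dU f (v, s)) (at v within {-1..u})"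
        by simp
    qed (use u in simp)
    then show ?thesis
      by (simp add: integral_unique)
  qed
  have leibniz: "((\<lambda>s. integral (cbox (-1) u) (\<lambda>v. dU f (v, s))) has_vector_derivative
                  integral (cbox (-1) u) (\<lambda>v. dT T (dU f) (v, t))) (at t within {0..<T})"
  proof (rule leibniz_rule_vector_derivative)
    fix s v assume "s \<in> {0..<T}" "v \<in> cbox (-1) u"
    with u have "(v, s) \<in> strip T"
      by (auto simp: mem_strip_iff)
    from C1_on_stripD(2)[OF fu this]
    show "((\<lambda>s. dU f (v, s)) has_vector_derivative dT T (dU f) (v, s)) (at s within {0..<T})"
      by simp
  next
    fix s assume "s \<in> {0..<T}"
    with u have "continuous_on (cbox (-1) u) (\<lambda>v. dU f (v, s))"
      by (intro continuous_on_compose2[OF C1_on_strip_imp_continuous_on[OF fu]])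
        (auto intro!: continuous_intros simp: mem_strip_iff)
    then show "(\<lambda>v. dU f (v, s)) integrable_on cbox (-1) u"
      by (rule integrable_continuous)
  next
    have "continuous_on ({0..<T} \<times> cbox (-1) u) (\<lambda>z. dT T (dU f) (snd z, fst z))"
      using u by (intro continuous_on_compose2[OF cont]) (auto intro!: continuous_intros simp: mem_strip_iff)
    then show "continuous_on ({0..<T} \<times> cbox (-1) u) (\<lambda>(s, v). dT T (dU f) (v, s))"
      by (simp add: split_beta)
  qed (use t in auto)
  have "(-1, t) \<in> strip T"
    using t by (simp add: mem_strip_iff)
  from has_vector_derivative_add[OF C1_on_stripD(2)[OF f this, simplified] leibniz[unfolded cbox_interval]]
  have "((\<lambda>s. f (-1, s) + integral {-1..u} (\<lambda>v. dU f (v, s))) has_vector_derivative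
          dT T f (-1, t) + integral {-1..u} (\<lambda>v. dT T (dU f) (v, t))) (at t within {0..<T})"
    by simp
  from has_vector_derivative_transform[OF t ftc this]
  show "((\<lambda>s. f (fst (u, t), s)) has_vector_derivative
          dT T f (-1, t) + integral {-1..u} (\<lambda>v. dT T (dU f) (v, t))) (at (snd (u, t)) within {0..<T})"
    by simp
qed

theorem dT_dU_commute:
  fixes f :: "real \<times> real \<Rightarrow> 'a::banach"
  assumes f: "C1_on_strip T f" and fu: "C1_on_strip T (dU f)"
    and cont: "continuous_on (strip T) (dT T (dU f))" and p: "p \<in> strip T"
  shows "dT T (dU f) p = dU (dT T f) p"
proof -
  obtain u t where p_eq: "p = (u, t)" and u: "u \<in> {-1..1}" and t: "t \<in> {0..<T}"
    using p by (cases p) (auto simp: mem_strip_iff)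
  have "continuous_on {-1..1} (\<lambda>v. dT T (dU f) (v, t))"
    using t by (intro continuous_on_compose2[OF cont]) (auto intro!: continuous_intros simp: mem_strip_iff)
  from has_vector_derivative_add[OF has_vector_derivative_const integral_has_vector_derivative[OF this u]]
  have "((\<lambda>v. dT T f (-1, t) + integral {-1..v} (\<lambda>v. dT T (dU f) (v, t))) has_vector_derivative
          dT T (dU f) (u, t)) (at u within {-1..1})"
    by simp
  from has_vector_derivative_transform[OF u dT_eq_dT_left_plus_integral[OF f fu cont _ t] this]
  have "((\<lambda>v. dT T f (v, t)) has_vector_derivative dT T (dU f) (u, t)) (at u within {-1..1})" .
  with p p_eq show ?thesis
    by (simp add: dU_eqI)
qed

lemma smooth_on_strip_dT_dU_commute:
  "smooth_on_strip T f \<Longrightarrow> p \<in> strip T \<Longrightarrow> dT T (dU f) p = dU (dT T f) p"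
  for f :: "real \<times> real \<Rightarrow> 'a::banach"
  by (intro dT_dU_commute smooth_on_strip_imp_C1 C1_on_strip_imp_continuous_on
      smooth_on_strip_dU smooth_on_strip_dT)

lemmas smooth_on_strip_intros =
  smooth_on_strip_const smooth_on_strip_add smooth_on_strip_minus smooth_on_strip_diff
  smooth_on_strip_mult smooth_on_strip_dU smooth_on_strip_dT

lemmas strip_derivative_rules =
  dU_const dT_const dU_add dT_add dU_minus dT_minus dU_diff dT_diff dU_mult dT_mult

section \<open>Evolution of the curvature under curve diffusion\<close>

locale curve_diffusion_flow =
  fixes T :: real and \<alpha> :: "real \<times> real \<Rightarrow> real \<times> real"
  assumes smooth: "smooth_on_strip T \<alpha>"
    and regular: "\<And>p. p \<in> strip T \<Longrightarrow> dU \<alpha> p \<noteq> 0"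
    and evolution: "\<And>p. p \<in> strip T \<Longrightarrow> dT T \<alpha> p = curv_s \<alpha> 2 p *\<^sub>R normal \<alpha> p"
begin

definition \<alpha>1 :: "real \<times> real \<Rightarrow> real" where "\<alpha>1 p = fst (\<alpha> p)"
definition \<alpha>2 :: "real \<times> real \<Rightarrow> real" where "\<alpha>2 p = snd (\<alpha> p)"
definition speed_sq :: "real \<times> real \<Rightarrow> real" where
  "speed_sq p = dU \<alpha>1 p * dU \<alpha>1 p + dU \<alpha>2 p * dU \<alpha>2 p"
definition inv_speed :: "real \<times> real \<Rightarrow> real" where "inv_speed p = speed_sq p powr (-1/2)"
definition ds :: "(real \<times> real \<Rightarrow> real) \<Rightarrow> real \<times> real \<Rightarrow> real" where "ds g p = inv_speed p * dU g p"
definition \<tau>1 :: "real \<times> real \<Rightarrow> real" where "\<tau>1 = ds \<alpha>1"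
definition \<tau>2 :: "real \<times> real \<Rightarrow> real" where "\<tau>2 = ds \<alpha>2"
definition \<kappa> :: "nat \<Rightarrow> real \<times> real \<Rightarrow> real" where
  "\<kappa> m = (ds ^^ m) (\<lambda>p. \<tau>2 p * ds \<tau>1 p - \<tau>1 p * ds \<tau>2 p)"

lemma \<kappa>_0: "\<kappa> 0 p = \<tau>2 p * ds \<tau>1 p - \<tau>1 p * ds \<tau>2 p"
  by (simp add: \<kappa>_def)

lemma \<kappa>_Suc: "\<kappa> (Suc m) = ds (\<kappa> m)"
  by (simp add: \<kappa>_def)

lemma dU_\<alpha>: "p \<in> strip T \<Longrightarrow> dU \<alpha> p = (dU \<alpha>1 p, dU \<alpha>2 p)"
  using dU_linear[OF bounded_linear_fst smooth_on_strip_imp_C1[OF smooth]]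
    dU_linear[OF bounded_linear_snd smooth_on_strip_imp_C1[OF smooth]]
  unfolding \<alpha>1_def[abs_def] \<alpha>2_def[abs_def] by (metis prod.collapse)

lemma speed_sq_pos: "p \<in> strip T \<Longrightarrow> speed_sq p > 0"
  using regular[of p] dU_\<alpha>[of p] unfolding speed_sq_def
  by (metis add_pos_nonneg add_nonneg_pos zero_le_square not_real_square_gt_zero zero_prod_def)

lemma smooth_\<alpha>1: "smooth_on_strip T \<alpha>1"
  and smooth_\<alpha>2: "smooth_on_strip T \<alpha>2"
  unfolding \<alpha>1_def[abs_def] \<alpha>2_def[abs_def]
  by (intro smooth_on_strip_linear[OF _ smooth] bounded_linear_fst bounded_linear_snd)+

lemma smooth_speed_sq: "smooth_on_strip T speed_sq"
  unfolding speed_sq_def[abs_def] by (intro smooth_on_strip_intros smooth_\<alpha>1 smooth_\<alpha>2)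

lemma smooth_inv_speed: "smooth_on_strip T inv_speed"
  unfolding inv_speed_def[abs_def] by (intro smooth_on_strip_powr speed_sq_pos smooth_speed_sq)

lemma smooth_ds: "smooth_on_strip T g \<Longrightarrow> smooth_on_strip T (ds g)"
  unfolding ds_def[abs_def] by (intro smooth_on_strip_intros smooth_inv_speed)

lemma smooth_\<tau>1: "smooth_on_strip T \<tau>1"
  and smooth_\<tau>2: "smooth_on_strip T \<tau>2"
  unfolding \<tau>1_def \<tau>2_def by (intro smooth_ds smooth_\<alpha>1 smooth_\<alpha>2)+

lemma smooth_\<kappa>: "smooth_on_strip T (\<kappa> m)"
proof (induction m)
  case 0
  show ?case
    unfolding \<kappa>_def by (simp add: smooth_on_strip_intros smooth_ds smooth_\<tau>1 smooth_\<tau>2)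
qed (simp add: \<kappa>_Suc smooth_ds)

lemmas smooth_flow_intros = smooth_on_strip_intros smooth_on_strip_imp_C1
  smooth_\<alpha>1 smooth_\<alpha>2 smooth_speed_sq smooth_inv_speed smooth_ds smooth_\<tau>1 smooth_\<tau>2 smooth_\<kappa>

lemmas derivative_rules = strip_derivative_rules[where T = T]

lemma inv_speed_sq: "p \<in> strip T \<Longrightarrow> inv_speed p * inv_speed p * speed_sq p = 1"
  using speed_sq_pos[of p] by (simp add: inv_speed_def flip: powr_add)

lemma inverse_norm_dU_\<alpha>: "p \<in> strip T \<Longrightarrow> inverse (norm (dU \<alpha> p)) = inv_speed p"
  using speed_sq_pos[of p] dU_\<alpha>[of p]
  by (simp add: inv_speed_def speed_sq_def norm_Pair power2_eq_square powr_minus powr_half_sqrt)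

lemma dS_eq_ds: "p \<in> strip T \<Longrightarrow> dS \<alpha> g p = ds g p"
  by (simp add: dS_def ds_def inverse_norm_dU_\<alpha>)

lemma dS_\<alpha>: "eq_on_strip T (dS \<alpha> \<alpha>) (\<lambda>p. (\<tau>1 p, \<tau>2 p))"
  unfolding eq_on_strip_def
proof
  fix p assume "p \<in> strip T"
  then show "dS \<alpha> \<alpha> p = (\<tau>1 p, \<tau>2 p)"
    unfolding dS_def by (simp add: inverse_norm_dU_\<alpha>) (simp add: dU_\<alpha> \<tau>1_def \<tau>2_def ds_def)
qed

lemma normal_eq: "p \<in> strip T \<Longrightarrow> normal \<alpha> p = (- \<tau>2 p, \<tau>1 p)"
  using dS_\<alpha> by (simp add: eq_on_strip_def normal_def tangent_def rotJ_def)

lemma curv_eq_\<kappa>_0: "p \<in> strip T \<Longrightarrow> curv \<alpha> p = \<kappa> 0 p"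
proof -
  assume p: "p \<in> strip T"
  have "dU (\<lambda>p. (\<tau>1 p, \<tau>2 p)) p = (dU \<tau>1 p, dU \<tau>2 p)"
    by (intro dU_eqI[OF p] has_vector_derivative_Pair C1_on_stripD[OF _ p]
        smooth_on_strip_imp_C1 smooth_\<tau>1 smooth_\<tau>2)
  with dU_cong[OF dS_\<alpha> p] p show ?thesis
    by (simp add: curv_def dS_def inverse_norm_dU_\<alpha> normal_eq \<kappa>_0 ds_def algebra_simps)
qed

lemma curv_s_eq_\<kappa>: "eq_on_strip T (curv_s \<alpha> m) (\<kappa> m)"
proof (induction m)
  case 0
  show ?case
    by (simp add: eq_on_strip_def curv_s_def curv_eq_\<kappa>_0)
next
  case (Suc m)
  have "curv_s \<alpha> (Suc m) = dS \<alpha> (curv_s \<alpha> m)"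
    by (simp add: curv_s_def)
  then show ?case
    by (simp add: eq_on_strip_def dS_eq_ds \<kappa>_Suc ds_def dU_cong[OF Suc.IH])
qed

lemma dT_\<alpha>1: "p \<in> strip T \<Longrightarrow> dT T \<alpha>1 p = - \<kappa> 2 p * \<tau>2 p"
  and dT_\<alpha>2: "p \<in> strip T \<Longrightarrow> dT T \<alpha>2 p = \<kappa> 2 p * \<tau>1 p"
  using dT_linear[OF bounded_linear_fst smooth_on_strip_imp_C1[OF smooth]]
    dT_linear[OF bounded_linear_snd smooth_on_strip_imp_C1[OF smooth]]
    evolution normal_eq curv_s_eq_\<kappa>[of 2]
  unfolding \<alpha>1_def[abs_def] \<alpha>2_def[abs_def] eq_on_strip_def by auto

lemma \<tau>_unit: "p \<in> strip T \<Longrightarrow> \<tau>1 p * \<tau>1 p + \<tau>2 p * \<tau>2 p = 1"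
  using inv_speed_sq[of p] by (simp add: \<tau>1_def \<tau>2_def ds_def speed_sq_def algebra_simps)

lemma \<tau>_orthogonal_dU_\<tau>: assumes p: "p \<in> strip T" shows "\<tau>1 p * dU \<tau>1 p + \<tau>2 p * dU \<tau>2 p = 0"
proof -
  have "eq_on_strip T (\<lambda>p. \<tau>1 p * \<tau>1 p + \<tau>2 p * \<tau>2 p) (\<lambda>p. 1)"
    using \<tau>_unit by (simp add: eq_on_strip_def)
  from dU_cong[OF this p] p show ?thesis
    by (simp add: derivative_rules smooth_flow_intros algebra_simps)
qed

lemma ds_\<tau>1: "p \<in> strip T \<Longrightarrow> ds \<tau>1 p = \<kappa> 0 p * \<tau>2 p"
  and ds_\<tau>2: "p \<in> strip T \<Longrightarrow> ds \<tau>2 p = - \<kappa> 0 p * \<tau>1 p"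
  using \<tau>_unit[of p] \<tau>_orthogonal_dU_\<tau>[of p] unfolding \<kappa>_0 ds_def by algebra+

lemma dT_dU_\<alpha>1: "p \<in> strip T \<Longrightarrow> dT T (dU \<alpha>1) p = - (\<kappa> 2 p * dU \<tau>2 p + dU (\<kappa> 2) p * \<tau>2 p)"
  and dT_dU_\<alpha>2: "p \<in> strip T \<Longrightarrow> dT T (dU \<alpha>2) p = \<kappa> 2 p * dU \<tau>1 p + dU (\<kappa> 2) p * \<tau>1 p"
proof -
  assume p: "p \<in> strip T"
  have "eq_on_strip T (dT T \<alpha>1) (\<lambda>p. - (\<kappa> 2 p * \<tau>2 p))" "eq_on_strip T (dT T \<alpha>2) (\<lambda>p. \<kappa> 2 p * \<tau>1 p)"
    using dT_\<alpha>1 dT_\<alpha>2 by (simp_all add: eq_on_strip_def)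
  from dU_cong[OF this(1) p] dU_cong[OF this(2) p] p
  show "dT T (dU \<alpha>1) p = - (\<kappa> 2 p * dU \<tau>2 p + dU (\<kappa> 2) p * \<tau>2 p)"
    and "dT T (dU \<alpha>2) p = \<kappa> 2 p * dU \<tau>1 p + dU (\<kappa> 2) p * \<tau>1 p"
    by (simp_all add: smooth_on_strip_dT_dU_commute smooth_flow_intros derivative_rules)
qed

lemma dT_inv_speed:
  assumes p: "p \<in> strip T"
  shows "dT T inv_speed p = - inv_speed p * \<kappa> 2 p * \<kappa> 0 p"
proof -
  have "eq_on_strip T (\<lambda>p. inv_speed p * inv_speed p * speed_sq p) (\<lambda>p. 1)"
    using inv_speed_sq by (simp add: eq_on_strip_def)
  from dT_cong[OF this p] p
  have "inv_speed p * inv_speed p * dT T speed_sq p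
        + (inv_speed p * dT T inv_speed p + dT T inv_speed p * inv_speed p) * speed_sq p = 0"
    by (simp add: derivative_rules smooth_flow_intros)
  moreover have "dT T speed_sq p = dU \<alpha>1 p * dT T (dU \<alpha>1) p + dT T (dU \<alpha>1) p * dU \<alpha>1 p
      + (dU \<alpha>2 p * dT T (dU \<alpha>2) p + dT T (dU \<alpha>2) p * dU \<alpha>2 p)"
    unfolding speed_sq_def[abs_def] using p by (simp add: derivative_rules smooth_flow_intros)
  ultimately show ?thesis
    using inv_speed_sq[OF p] ds_\<tau>1[OF p] ds_\<tau>2[OF p] \<kappa>_0[of p] dT_dU_\<alpha>1[OF p] dT_dU_\<alpha>2[OF p]
    unfolding \<tau>1_def \<tau>2_def ds_def by algebra
qed

lemma dT_ds:
  assumes g: "smooth_on_strip T g" and p: "p \<in> strip T"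
  shows "dT T (ds g) p = - \<kappa> 2 p * \<kappa> 0 p * ds g p + ds (dT T g) p"
proof -
  have "dT T (ds g) p = inv_speed p * dT T (dU g) p + dT T inv_speed p * dU g p"
    unfolding ds_def[abs_def] using p g by (simp add: derivative_rules smooth_flow_intros)
  then show ?thesis
    using dT_inv_speed[OF p] smooth_on_strip_dT_dU_commute[OF g p] by (simp add: ds_def algebra_simps)
qed

lemma dT_\<tau>1: "p \<in> strip T \<Longrightarrow> dT T \<tau>1 p = - \<kappa> 3 p * \<tau>2 p"
  and dT_\<tau>2: "p \<in> strip T \<Longrightarrow> dT T \<tau>2 p = \<kappa> 3 p * \<tau>1 p"
proof -
  assume p: "p \<in> strip T"
  have \<kappa>_3: "\<kappa> 3 p = ds (\<kappa> 2) p"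
    by (simp add: \<kappa>_def numeral_eq_Suc)
  show "dT T \<tau>1 p = - \<kappa> 3 p * \<tau>2 p" "dT T \<tau>2 p = \<kappa> 3 p * \<tau>1 p"
    using dT_ds[OF smooth_\<alpha>1 p] dT_ds[OF smooth_\<alpha>2 p] dT_dU_\<alpha>1[OF p] dT_dU_\<alpha>2[OF p]
      smooth_on_strip_dT_dU_commute[OF smooth_\<alpha>1 p] smooth_on_strip_dT_dU_commute[OF smooth_\<alpha>2 p]
      ds_\<tau>1[OF p] ds_\<tau>2[OF p] \<kappa>_3
    unfolding \<tau>1_def[symmetric] \<tau>2_def[symmetric] ds_def by algebra+
qed

lemma dT_\<kappa>_0: assumes p: "p \<in> strip T" shows "dT T (\<kappa> 0) p = - \<kappa> 4 p - \<kappa> 0 p * \<kappa> 0 p * \<kappa> 2 p"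
proof -
  have "eq_on_strip T (dT T \<tau>1) (\<lambda>p. - (\<kappa> 3 p * \<tau>2 p))" "eq_on_strip T (dT T \<tau>2) (\<lambda>p. \<kappa> 3 p * \<tau>1 p)"
    using dT_\<tau>1 dT_\<tau>2 by (simp_all add: eq_on_strip_def)
  from dU_cong[OF this(1) p] dU_cong[OF this(2) p] p
  have "dU (dT T \<tau>1) p = - (\<kappa> 3 p * dU \<tau>2 p + dU (\<kappa> 3) p * \<tau>2 p)"
    and "dU (dT T \<tau>2) p = \<kappa> 3 p * dU \<tau>1 p + dU (\<kappa> 3) p * \<tau>1 p"
    by (simp_all add: derivative_rules smooth_flow_intros)
  moreover have "dT T (\<kappa> 0) p = \<tau>2 p * dT T (ds \<tau>1) p + dT T \<tau>2 p * ds \<tau>1 p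
      - (\<tau>1 p * dT T (ds \<tau>2) p + dT T \<tau>1 p * ds \<tau>2 p)"
    unfolding \<kappa>_def funpow_0 using p by (simp add: derivative_rules smooth_flow_intros)
  moreover have "\<kappa> 4 p = ds (\<kappa> 3) p"
    by (simp add: \<kappa>_def numeral_eq_Suc)
  ultimately show ?thesis
    using dT_ds[OF smooth_\<tau>1 p] dT_ds[OF smooth_\<tau>2 p] ds_\<tau>1[OF p] ds_\<tau>2[OF p] \<tau>_unit[OF p]
      dT_\<tau>1[OF p] dT_\<tau>2[OF p]
    unfolding ds_def by algebra
qed

lemma dT_\<kappa>_Suc:
  "p \<in> strip T \<Longrightarrow> dT T (\<kappa> (Suc m)) p = - \<kappa> 2 p * \<kappa> 0 p * \<kappa> (Suc m) p + ds (dT T (\<kappa> m)) p"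
  using dT_ds[OF smooth_\<kappa>] by (simp add: \<kappa>_Suc)

end

section \<open>Polynomials in the curvature derivatives\<close>

text \<open>\<open>Kappa j\<close> stands for \<open>\<kappa>\<^sub>j\<close>; a monomial is odd when its total number of derivatives is.
  \<open>graded N e\<close> says that \<open>e\<close> involves only \<open>\<kappa>\<^sub>j\<close> with \<open>j \<le> N\<close> and that its monomials all have
  the same parity.\<close>
datatype kexpr = Kappa nat | Const real | Plus kexpr kexpr | Times kexpr kexpr

fun kexpr_ds :: "kexpr \<Rightarrow> kexpr" where
  "kexpr_ds (Kappa j) = Kappa (Suc j)"
| "kexpr_ds (Const c) = Times (Const 0) (Kappa 1)" \<comment> \<open>an odd zero, so that sums stay homogeneous\<close>
| "kexpr_ds (Plus e1 e2) = Plus (kexpr_ds e1) (kexpr_ds e2)"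
| "kexpr_ds (Times e1 e2) = Plus (Times e1 (kexpr_ds e2)) (Times (kexpr_ds e1) e2)"

fun kexpr_odd :: "kexpr \<Rightarrow> bool" where
  "kexpr_odd (Kappa j) = odd j"
| "kexpr_odd (Const c) = False"
| "kexpr_odd (Plus e1 e2) = kexpr_odd e1"
| "kexpr_odd (Times e1 e2) = (kexpr_odd e1 \<noteq> kexpr_odd e2)"

fun graded :: "nat \<Rightarrow> kexpr \<Rightarrow> bool" where
  "graded N (Kappa j) = (j \<le> N)"
| "graded N (Const c) = True"
| "graded N (Plus e1 e2) = (graded N e1 \<and> graded N e2 \<and> kexpr_odd e1 = kexpr_odd e2)"
| "graded N (Times e1 e2) = (graded N e1 \<and> graded N e2)"

lemma graded_mono: "graded N e \<Longrightarrow> N \<le> N' \<Longrightarrow> graded N' e"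
  by (induction e) auto

lemma kexpr_odd_ds: "graded N e \<Longrightarrow> kexpr_odd (kexpr_ds e) \<longleftrightarrow> \<not> kexpr_odd e"
  by (induction e) auto

lemma graded_ds: "graded N e \<Longrightarrow> graded (Suc N) (kexpr_ds e)"
  by (induction e) (auto simp: kexpr_odd_ds intro: graded_mono)

fun dT_\<kappa>_lower :: "nat \<Rightarrow> kexpr" where
  "dT_\<kappa>_lower 0 = Times (Const (-1)) (Times (Times (Kappa 0) (Kappa 0)) (Kappa 2))"
| "dT_\<kappa>_lower (Suc m) =
     Plus (kexpr_ds (dT_\<kappa>_lower m))
       (Times (Const (-1)) (Times (Times (Kappa 2) (Kappa 0)) (Kappa (Suc m))))"

lemma graded_dT_\<kappa>_lower: "graded (m + 2) (dT_\<kappa>_lower m) \<and> (kexpr_odd (dT_\<kappa>_lower m) \<longleftrightarrow> odd m)"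
proof (induction m)
  case (Suc m)
  then show ?case
    using graded_ds[of "m + 2" "dT_\<kappa>_lower m"] kexpr_odd_ds[of "m + 2" "dT_\<kappa>_lower m"] by simp
qed simp

context curve_diffusion_flow begin

fun kexpr_eval :: "kexpr \<Rightarrow> real \<times> real \<Rightarrow> real" where
  "kexpr_eval (Kappa j) = \<kappa> j"
| "kexpr_eval (Const c) = (\<lambda>p. c)"
| "kexpr_eval (Plus e1 e2) = (\<lambda>p. kexpr_eval e1 p + kexpr_eval e2 p)"
| "kexpr_eval (Times e1 e2) = (\<lambda>p. kexpr_eval e1 p * kexpr_eval e2 p)"

lemma smooth_kexpr_eval: "smooth_on_strip T (kexpr_eval e)"
  by (induction e) (simp_all add: smooth_flow_intros)

lemma kexpr_eval_ds: "p \<in> strip T \<Longrightarrow> kexpr_eval (kexpr_ds e) p = ds (kexpr_eval e) p"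
  by (induction e)
    (simp_all add: \<kappa>_Suc ds_def derivative_rules smooth_flow_intros smooth_kexpr_eval algebra_simps)

lemma kexpr_eval_eq_0:
  "graded N e \<Longrightarrow> kexpr_odd e \<Longrightarrow> (\<And>j. j \<le> N \<Longrightarrow> odd j \<Longrightarrow> \<kappa> j p = 0) \<Longrightarrow> kexpr_eval e p = 0"
  by (induction e) auto

lemma dT_\<kappa>: "p \<in> strip T \<Longrightarrow> dT T (\<kappa> m) p = kexpr_eval (dT_\<kappa>_lower m) p - \<kappa> (m + 4) p"
proof (induction m arbitrary: p)
  case 0
  then show ?case
    using dT_\<kappa>_0 by simp
next
  case (Suc m)
  have "eq_on_strip T (dT T (\<kappa> m)) (\<lambda>p. kexpr_eval (dT_\<kappa>_lower m) p - \<kappa> (m + 4) p)"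
    using Suc.IH by (simp add: eq_on_strip_def)
  from dU_cong[OF this Suc.prems] Suc.prems
  have "dU (dT T (\<kappa> m)) p = dU (kexpr_eval (dT_\<kappa>_lower m)) p - dU (\<kappa> (m + 4)) p"
    by (simp add: derivative_rules smooth_flow_intros smooth_kexpr_eval)
  then have "ds (dT T (\<kappa> m)) p = ds (kexpr_eval (dT_\<kappa>_lower m)) p - \<kappa> (Suc m + 4) p"
    using \<kappa>_Suc[of "m + 4"] by (simp add: ds_def right_diff_distrib)
  with dT_\<kappa>_Suc[OF Suc.prems, of m] kexpr_eval_ds[OF Suc.prems, of "dT_\<kappa>_lower m"] show ?case
    by (simp add: algebra_simps)
qed

section \<open>Odd curvature derivatives at a Neumann boundary\<close>

lemma \<kappa>_3_eq_0_if_normal_parallel: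
  assumes u: "u \<in> {-1..1}" and t: "t \<in> {0..<T}" and e: "e \<noteq> 0"
    and parallel: "\<And>s. s \<in> {0..<T} \<Longrightarrow> \<exists>c. normal \<alpha> (u, s) = c *\<^sub>R e"
  shows "\<kappa> 3 (u, t) = 0"
proof -
  have tangent_perp: "\<tau>1 (u, s) * fst e + \<tau>2 (u, s) * snd e = 0"
    and normal_eq_c: "\<exists>c. - \<tau>2 (u, s) = c * fst e \<and> \<tau>1 (u, s) = c * snd e" if s: "s \<in> {0..<T}" for s
  proof -
    obtain c where "normal \<alpha> (u, s) = c *\<^sub>R e"
      using parallel[OF s] by blast
    moreover have "(u, s) \<in> strip T"
      using u s by (simp add: mem_strip_iff)
    ultimately have c: "- \<tau>2 (u, s) = c * fst e" "\<tau>1 (u, s) = c * snd e"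
      using normal_eq by (auto simp: prod_eq_iff)
    then show "\<tau>1 (u, s) * fst e + \<tau>2 (u, s) * snd e = 0"
      by algebra
    from c show "\<exists>c. - \<tau>2 (u, s) = c * fst e \<and> \<tau>1 (u, s) = c * snd e"
      by blast
  qed
  have p: "(u, t) \<in> strip T"
    using u t by (simp add: mem_strip_iff)
  have "dT T (\<lambda>p. \<tau>1 p * fst e + \<tau>2 p * snd e) (u, t) = 0"
    by (rule dT_eq_0_if_vanishes_on_line[OF u t]) (rule tangent_perp)
  then have "\<kappa> 3 (u, t) * (- \<tau>2 (u, t) * fst e + \<tau>1 (u, t) * snd e) = 0"
    using p by (simp add: derivative_rules smooth_flow_intros dT_\<tau>1 dT_\<tau>2 algebra_simps)
  moreover obtain c where c: "- \<tau>2 (u, t) = c * fst e" "\<tau>1 (u, t) = c * snd e"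
    using normal_eq_c[OF t] by blast
  ultimately have "\<kappa> 3 (u, t) * c * ((fst e)\<^sup>2 + (snd e)\<^sup>2) = 0"
    by (simp add: power2_eq_square algebra_simps)
  moreover have "c \<noteq> 0"
    using \<tau>_unit[OF p] c by auto
  moreover have "(fst e)\<^sup>2 + (snd e)\<^sup>2 \<noteq> 0"
    using e by (simp add: prod_eq_iff sum_power2_eq_zero_iff)
  ultimately show ?thesis
    by auto
qed

lemma odd_\<kappa>_eq_0_on_line:
  assumes u: "u \<in> {-1..1}"
    and \<kappa>_1: "\<And>t. t \<in> {0..<T} \<Longrightarrow> \<kappa> 1 (u, t) = 0"
    and \<kappa>_3: "\<And>t. t \<in> {0..<T} \<Longrightarrow> \<kappa> 3 (u, t) = 0"
  shows "odd j \<Longrightarrow> t \<in> {0..<T} \<Longrightarrow> \<kappa> j (u, t) = 0"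
proof (induction j arbitrary: t rule: less_induct)
  case (less j)
  show ?case
  proof (cases "j \<le> 3")
    case True
    with less.prems(1) have "j = 1 \<or> j = 3"
      by presburger
    with less.prems(2) \<kappa>_1 \<kappa>_3 show ?thesis
      by auto
  next
    case False
    define m where "m = j - 4"
    with False less.prems(1) have j: "j = m + 4" and m: "odd m"
      by presburger+
    have "dT T (\<kappa> m) (u, t) = 0"
      by (rule dT_eq_0_if_vanishes_on_line[OF u less.prems(2)]) (use less.IH[of m] j m in auto)
    moreover have "kexpr_eval (dT_\<kappa>_lower m) (u, t) = 0"
      using graded_dT_\<kappa>_lower[of m] m less.IH[of _ t] less.prems(2) j
      by (intro kexpr_eval_eq_0[where N = "m + 2"]) auto
    ultimately show ?thesis
      using dT_\<kappa>[of "(u, t)" m] u less.prems(2) j by (simp add: mem_strip_iff)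
  qed
qed

lemma odd_curv_s_eq_0_at_neumann_boundary:
  assumes u: "u \<in> {-1..1}" and e: "e \<noteq> 0"
    and curv_s_1: "\<And>t. t \<in> {0..<T} \<Longrightarrow> curv_s \<alpha> 1 (u, t) = 0"
    and parallel: "\<And>t. t \<in> {0..<T} \<Longrightarrow> \<exists>c. normal \<alpha> (u, t) = c *\<^sub>R e"
    and j: "odd j" and t: "t \<in> {0..<T}"
  shows "curv_s \<alpha> j (u, t) = 0"
proof -
  have on_strip: "(u, s) \<in> strip T" if "s \<in> {0..<T}" for s
    using u that by (simp add: mem_strip_iff)
  have "\<kappa> j (u, t) = 0"
  proof (rule odd_\<kappa>_eq_0_on_line[OF u _ _ j t])
    show "\<kappa> 1 (u, s) = 0" if "s \<in> {0..<T}" for s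
      using curv_s_1[OF that] curv_s_eq_\<kappa>[of 1] on_strip[OF that] by (simp add: eq_on_strip_def)
    show "\<kappa> 3 (u, s) = 0" if "s \<in> {0..<T}" for s
      by (rule \<kappa>_3_eq_0_if_normal_parallel[OF u that e parallel])
  qed
  then show ?thesis
    using curv_s_eq_\<kappa>[of j] on_strip[OF t] by (simp add: eq_on_strip_def)
qed

end

theorem lemma3p2:
  fixes \<theta>1 \<theta>2 T :: real and \<alpha> :: "real \<times> real \<Rightarrow> real \<times> real"
  assumes "0 \<le> \<theta>2" and "\<theta>2 < \<theta>1" and "\<theta>1 < pi"
    and "0 < T"
    and "CDF_GNBC \<theta>1 \<theta>2 T \<alpha>"
  shows "\<forall>l::nat. l \<ge> 1 \<longrightarrow> (\<forall>t\<in>{0..<T}.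
           curv_s \<alpha> (2 * l - 1) (-1, t) = 0 \<and> curv_s \<alpha> (2 * l - 1) (1, t) = 0)"
proof (intro allI impI ballI conjI)
  interpret curve_diffusion_flow T \<alpha>
    using assms(5) by unfold_locales (auto simp: CDF_GNBC_def)
  have direction_nonzero: "(cos \<theta>, sin \<theta>) \<noteq> 0" for \<theta> :: real
  proof
    assume "(cos \<theta>, sin \<theta>) = 0"
    then have "sin \<theta> = 0" "cos \<theta> = 0"
      by (simp_all add: zero_prod_def)
    with sin_zero_abs_cos_one[of \<theta>] show False
      by simp
  qed
  have boundary: "\<forall>t\<in>{0..<T}.
      (\<exists>c. normal \<alpha> (-1, t) = c *\<^sub>R (cos \<theta>1, sin \<theta>1)) \<and>
      (\<exists>c. normal \<alpha> (1, t) = c *\<^sub>R (cos \<theta>2, sin \<theta>2)) \<and>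
      curv_s \<alpha> 1 (-1, t) = 0 \<and> curv_s \<alpha> 1 (1, t) = 0"
    using assms(5) by (simp add: CDF_GNBC_def)
  fix l :: nat and t assume "l \<ge> 1" and t: "t \<in> {0..<T}"
  then have odd: "odd (2 * l - 1)"
    by presburger
  show "curv_s \<alpha> (2 * l - 1) (-1, t) = 0"
    by (rule odd_curv_s_eq_0_at_neumann_boundary[OF _ direction_nonzero _ _ odd t])
      (use boundary in auto)
  show "curv_s \<alpha> (2 * l - 1) (1, t) = 0"
    by (rule odd_curv_s_eq_0_at_neumann_boundary[OF _ direction_nonzero _ _ odd t])
      (use boundary in auto)
qed

end
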